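(* Let $E$ be a pseudo effect algebra satisfying (RDP). Then: (a) $(\mathcal J(E),\le^+)$ is an Abelian Dedekind complete $\ell$-group. (b) If $\{m_i\}_{i\in I}$ is a nonempty family in $\mathcal J(E)$ bounded above in $\mathcal J(E)$ and $d(x):=\sup_i m_i(x)$ for $x\in E$, then for every $x\in E$ $$\Big(\bigvee_i m_i\Big)(x)=\sup\{d(x_1)+\cdots+d(x_n):\ x=x_1+\cdots+x_n,\ x_1,\dots,x_n\in E,\ n\ge1\}.$$ (c) If $\{m_i\}_{i\in I}$ is a nonempty family in $\mathcal J(E)$ bounded below in $\mathcal J(E)$ and $e(x):=\inf_i m_i(x)$ for $x\in E$, then for every $x\in E$ $$\Big(\bigwedge_i m_i\Big)(x)=\inf\{e(x_1)+\cdots+e(x_n):\ x=x_1+\cdots+x_n,\ x_1,\dots,x_n\in E,\ n\ge1\}.$$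
   Context: Pseudo effect algebra: partial algebra $(E;+,0,1)$ such that for all $a,b,c$: (i) $a+b$ and $(a+b)+c$ exist iff $b+c$ and $a+(b+c)$ exist, and then they are equal; (ii) there is exactly one $d$ and one $e$ with $a+d=e+a=1$; (iii) if $a+b$ exists there are $d,e$ with $a+b=d+a=b+e$; (iv) if $1+a$ or $a+1$ exists then $a=0$. (RDP): whenever $a_1+a_2=b_1+b_2$ there are $d_1,\dots,d_4$ with $d_1+d_2=a_1$, $d_3+d_4=a_2$, $d_1+d_3=b_1$, $d_2+d_4=b_2$. A signed measure is $m:E\to\mathbb R$ with $m(a+b)=m(a)+m(b)$ whenever $a+b$ is defined; a measure is a nonnegative signed measure; $m_1\le^+m_2$ iff $m_2-m_1$ is a measure. $\mathcal J(E)$ is the set of Jordan signed measures, i.e. signed measures that are differences of two measures, with pointwise addition. Dedekind complete: every nonempty subset bounded above has a supremum (and bounded below has an infimum). *)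

theory Defs
  imports Complex_Main
begin

definition pea :: "'a set \<Rightarrow> ('a \<Rightarrow> 'a \<Rightarrow> 'a option) \<Rightarrow> 'a \<Rightarrow> 'a \<Rightarrow> bool" where
  "pea E op zero one \<longleftrightarrow>
     zero \<in> E \<and> one \<in> E \<and>
     (\<forall>a\<in>E. \<forall>b\<in>E. \<forall>c. op a b = Some c \<longrightarrow> c \<in> E) \<and>
     \<comment> \<open>(i) associativity: (a+b)+c defined iff a+(b+c) defined, and then equal\<close>
     (\<forall>a\<in>E. \<forall>b\<in>E. \<forall>c\<in>E.
        Option.bind (op a b) (\<lambda>ab. op ab c) = Option.bind (op b c) (\<lambda>bc. op a bc)) \<and>
     \<comment> \<open>(ii)\<close>
     (\<forall>a\<in>E. (\<exists>!d. d \<in> E \<and> op a d = Some one) \<and> (\<exists>!e. e \<in> E \<and> op e a = Some one)) \<and>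
     \<comment> \<open>(iii)\<close>
     (\<forall>a\<in>E. \<forall>b\<in>E. op a b \<noteq> None \<longrightarrow>
        (\<exists>d\<in>E. \<exists>e\<in>E. op a b = op d a \<and> op a b = op b e)) \<and>
     \<comment> \<open>(iv)\<close>
     (\<forall>a\<in>E. (op one a \<noteq> None \<or> op a one \<noteq> None) \<longrightarrow> a = zero)"

definition RDP :: "'a set \<Rightarrow> ('a \<Rightarrow> 'a \<Rightarrow> 'a option) \<Rightarrow> bool" where
  "RDP E op \<longleftrightarrow>
     (\<forall>a1\<in>E. \<forall>a2\<in>E. \<forall>b1\<in>E. \<forall>b2\<in>E.
        op a1 a2 \<noteq> None \<and> op a1 a2 = op b1 b2 \<longrightarrow>
        (\<exists>d1\<in>E. \<exists>d2\<in>E. \<exists>d3\<in>E. \<exists>d4\<in>E.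
           op d1 d2 = Some a1 \<and> op d3 d4 = Some a2 \<and>
           op d1 d3 = Some b1 \<and> op d2 d4 = Some b2))"

text \<open>Real-valued functions on E are represented as functions 'a \<Rightarrow> real
that vanish outside E (so that pointwise operations stay in the class).\<close>

definition signed_measure :: "'a set \<Rightarrow> ('a \<Rightarrow> 'a \<Rightarrow> 'a option) \<Rightarrow> ('a \<Rightarrow> real) \<Rightarrow> bool" where
  "signed_measure E op m \<longleftrightarrow>
     (\<forall>x. x \<notin> E \<longrightarrow> m x = 0) \<and>
     (\<forall>a\<in>E. \<forall>b\<in>E. \<forall>c. op a b = Some c \<longrightarrow> m c = m a + m b)"

definition is_measure :: "'a set \<Rightarrow> ('a \<Rightarrow> 'a \<Rightarrow> 'a option) \<Rightarrow> ('a \<Rightarrow> real) \<Rightarrow> bool" where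
  "is_measure E op m \<longleftrightarrow> signed_measure E op m \<and> (\<forall>x\<in>E. 0 \<le> m x)"

definition le_plus :: "'a set \<Rightarrow> ('a \<Rightarrow> 'a \<Rightarrow> 'a option) \<Rightarrow> ('a \<Rightarrow> real) \<Rightarrow> ('a \<Rightarrow> real) \<Rightarrow> bool" where
  "le_plus E op m1 m2 \<longleftrightarrow> is_measure E op (\<lambda>x. m2 x - m1 x)"

definition jordan :: "'a set \<Rightarrow> ('a \<Rightarrow> 'a \<Rightarrow> 'a option) \<Rightarrow> ('a \<Rightarrow> real) set" where
  "jordan E op = {m. signed_measure E op m \<and>
     (\<exists>m1 m2. is_measure E op m1 \<and> is_measure E op m2 \<and> (\<forall>x. m x = m1 x - m2 x))}"

definition is_lub_J :: "'a set \<Rightarrow> ('a \<Rightarrow> 'a \<Rightarrow> 'a option) \<Rightarrow> ('a \<Rightarrow> real) set \<Rightarrow> ('a \<Rightarrow> real) \<Rightarrow> bool" where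
  "is_lub_J E op S s \<longleftrightarrow> s \<in> jordan E op \<and> (\<forall>m\<in>S. le_plus E op m s) \<and>
     (\<forall>u\<in>jordan E op. (\<forall>m\<in>S. le_plus E op m u) \<longrightarrow> le_plus E op s u)"

definition is_glb_J :: "'a set \<Rightarrow> ('a \<Rightarrow> 'a \<Rightarrow> 'a option) \<Rightarrow> ('a \<Rightarrow> real) set \<Rightarrow> ('a \<Rightarrow> real) \<Rightarrow> bool" where
  "is_glb_J E op S s \<longleftrightarrow> s \<in> jordan E op \<and> (\<forall>m\<in>S. le_plus E op s m) \<and>
     (\<forall>u\<in>jordan E op. (\<forall>m\<in>S. le_plus E op u m) \<longrightarrow> le_plus E op u s)"

definition bdd_above_J :: "'a set \<Rightarrow> ('a \<Rightarrow> 'a \<Rightarrow> 'a option) \<Rightarrow> ('a \<Rightarrow> real) set \<Rightarrow> bool" where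
  "bdd_above_J E op S \<longleftrightarrow> (\<exists>u\<in>jordan E op. \<forall>m\<in>S. le_plus E op m u)"

definition bdd_below_J :: "'a set \<Rightarrow> ('a \<Rightarrow> 'a \<Rightarrow> 'a option) \<Rightarrow> ('a \<Rightarrow> real) set \<Rightarrow> bool" where
  "bdd_below_J E op S \<longleftrightarrow> (\<exists>u\<in>jordan E op. \<forall>m\<in>S. le_plus E op u m)"

text \<open>Iterated sum x1 + (x2 + (... + xn)) of a nonempty list (None if undefined);
by associativity the bracketing is irrelevant.\<close>

fun psum :: "('a \<Rightarrow> 'a \<Rightarrow> 'a option) \<Rightarrow> 'a list \<Rightarrow> 'a option" where
  "psum op [] = None"
| "psum op [a] = Some a"
| "psum op (a # b # xs) = Option.bind (psum op (b # xs)) (op a)"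

definition decomp_sums :: "'a set \<Rightarrow> ('a \<Rightarrow> 'a \<Rightarrow> 'a option) \<Rightarrow> ('a \<Rightarrow> real) \<Rightarrow> 'a \<Rightarrow> real set" where
  "decomp_sums E op d x = {(\<Sum>y\<leftarrow>xs. d y) | xs. xs \<noteq> [] \<and> set xs \<subseteq> E \<and> psum op xs = Some x}"

end

theory Submission
  imports Defs
begin

(*
  Under (RDP) the supremum of a bounded family {m_i} of Jordan signed measures is
  the least signed measure dominating the pointwise supremum d = sup_i m_i.  The function d is
  subadditive (d(y+z) <= d(y) + d(z)), and for any subadditive d bounded by some signed measure
  the "envelope"
      D(x) = sup { d(x_1) + ... + d(x_n) : x = x_1 + ... + x_n }
  is additive: decompositions of a and b concatenate to one of a+b, and conversely the Riesz
  decomposition property refines any decomposition of a+b into decompositions of a and of b.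
  D dominates d and lies below every signed measure dominating d, so D is the least upper bound.
*)

subsection \<open>Pseudo effect algebras and their finite sums\<close>

lemma pea_closed: "pea E op zero one \<Longrightarrow> a \<in> E \<Longrightarrow> b \<in> E \<Longrightarrow> op a b = Some c \<Longrightarrow> c \<in> E"
  unfolding pea_def by blast

lemma pea_assoc:
  "pea E op zero one \<Longrightarrow> a \<in> E \<Longrightarrow> b \<in> E \<Longrightarrow> c \<in> E \<Longrightarrow>
     Option.bind (op a b) (\<lambda>ab. op ab c) = Option.bind (op b c) (op a)"
  unfolding pea_def by blast

lemma psum_Cons: "xs \<noteq> [] \<Longrightarrow> psum op (a # xs) = Option.bind (psum op xs) (op a)"
  by (cases xs) auto

lemma psum_ConsE:
  assumes "psum op (a # xs) = Some x" "xs \<noteq> []"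
  obtains y where "psum op xs = Some y" "op a y = Some x"
  using assms by (cases "psum op xs") (auto simp: psum_Cons)

lemma psum_closed:
  assumes pea: "pea E op zero one"
  shows "set xs \<subseteq> E \<Longrightarrow> psum op xs = Some x \<Longrightarrow> x \<in> E"
proof (induction xs arbitrary: x)
  case (Cons a xs)
  show ?case
  proof (cases "xs = []")
    case False
    then obtain y where y: "psum op xs = Some y" "op a y = Some x"
      using psum_ConsE[OF Cons.prems(2)] by blast
    with Cons show ?thesis by (auto intro: pea_closed[OF pea])
  qed (use Cons in simp)
qed simp

lemma signed_measure_psum:
  assumes pea: "pea E op zero one" and m: "signed_measure E op m"
  shows "set xs \<subseteq> E \<Longrightarrow> psum op xs = Some x \<Longrightarrow> m x = (\<Sum>y\<leftarrow>xs. m y)"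
proof (induction xs arbitrary: x)
  case (Cons a xs)
  show ?case
  proof (cases "xs = []")
    case False
    then obtain y where y: "psum op xs = Some y" "op a y = Some x"
      using psum_ConsE[OF Cons.prems(2)] by blast
    have "y \<in> E" using psum_closed[OF pea _ y(1)] Cons.prems(1) by simp
    then have "m x = m a + m y" using m Cons.prems(1) y(2) unfolding signed_measure_def by simp
    with Cons y(1) show ?thesis by simp
  qed (use Cons in simp)
qed simp

lemma psum_append:
  assumes pea: "pea E op zero one"
  shows "set xs \<subseteq> E \<Longrightarrow> set ys \<subseteq> E \<Longrightarrow> psum op xs = Some a \<Longrightarrow> psum op ys = Some b
     \<Longrightarrow> op a b = Some c \<Longrightarrow> psum op (xs @ ys) = Some c"
proof (induction xs arbitrary: a c)
  case (Cons x xs)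
  have "ys \<noteq> []" using Cons.prems(4) by auto
  show ?case
  proof (cases "xs = []")
    case True
    with Cons.prems \<open>ys \<noteq> []\<close> show ?thesis by (simp add: psum_Cons)
  next
    case False
    then obtain a' where a': "psum op xs = Some a'" "op x a' = Some a"
      using psum_ConsE[OF Cons.prems(3)] by blast
    have "a' \<in> E" "b \<in> E" "x \<in> E"
      using psum_closed[OF pea] Cons.prems a'(1) by auto
    then have "Option.bind (op a' b) (op x) = Some c"
      using pea_assoc[OF pea, of x a' b] a'(2) Cons.prems(5) by simp
    then obtain c' where c': "op a' b = Some c'" "op x c' = Some c"
      by (cases "op a' b") auto
    have "psum op (xs @ ys) = Some c'"
      using Cons.IH[OF _ Cons.prems(2) a'(1) Cons.prems(4) c'(1)] Cons.prems(1) by simp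
    with c'(2) False show ?thesis by (simp add: psum_Cons)
  qed
qed simp

lemma psum_refine:
  assumes pea: "pea E op zero one" and rdp: "RDP E op"
  shows "set xs \<subseteq> E \<Longrightarrow> psum op xs = Some c \<Longrightarrow> a \<in> E \<Longrightarrow> b \<in> E \<Longrightarrow> op a b = Some c \<Longrightarrow>
    \<exists>ps. list_all2 (\<lambda>x (y, z). y \<in> E \<and> z \<in> E \<and> op y z = Some x) xs ps
       \<and> psum op (map fst ps) = Some a \<and> psum op (map snd ps) = Some b"
proof (induction xs arbitrary: c a b)
  case (Cons x xs)
  show ?case
  proof (cases "xs = []")
    case True
    with Cons.prems show ?thesis by (intro exI[of _ "[(a, b)]"]) simp
  next
    case False
    then obtain c' where c': "psum op xs = Some c'" "op x c' = Some c"
      using psum_ConsE[OF Cons.prems(2)] by blast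
    have "c' \<in> E" "x \<in> E" using psum_closed[OF pea _ c'(1)] Cons.prems(1) by auto
    then obtain d1 d2 d3 d4 where d: "d1 \<in> E" "d2 \<in> E" "d3 \<in> E" "d4 \<in> E"
      "op d1 d2 = Some x" "op d3 d4 = Some c'" "op d1 d3 = Some a" "op d2 d4 = Some b"
      using rdp[unfolded RDP_def, rule_format, OF \<open>x \<in> E\<close> \<open>c' \<in> E\<close> Cons.prems(3,4)] Cons.prems(5) c'(2)
      by auto
    obtain ps where ps: "list_all2 (\<lambda>x (y, z). y \<in> E \<and> z \<in> E \<and> op y z = Some x) xs ps"
      "psum op (map fst ps) = Some d3" "psum op (map snd ps) = Some d4"
      using Cons.IH[OF _ c'(1) d(3,4,6)] Cons.prems(1) by auto
    have "ps \<noteq> []" using ps(1) False by auto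
    with ps d show ?thesis by (intro exI[of _ "(d1, d2) # ps"]) (simp add: psum_Cons)
  qed
qed simp

subsection \<open>Signed measures, the order le_plus, and Jordan signed measures\<close>

lemma signed_measure_add:
  "signed_measure E op f \<Longrightarrow> signed_measure E op g \<Longrightarrow> signed_measure E op (\<lambda>x. f x + g x)"
  unfolding signed_measure_def by auto

lemma signed_measure_uminus: "signed_measure E op f \<Longrightarrow> signed_measure E op (\<lambda>x. - f x)"
  unfolding signed_measure_def by auto

lemma signed_measure_diff:
  "signed_measure E op f \<Longrightarrow> signed_measure E op g \<Longrightarrow> signed_measure E op (\<lambda>x. f x - g x)"
  unfolding signed_measure_def by auto

lemma is_measure_zero: "is_measure E op (\<lambda>x. 0)"
  by (simp add: is_measure_def signed_measure_def)

lemma is_measure_add: "is_measure E op f \<Longrightarrow> is_measure E op g \<Longrightarrow> is_measure E op (\<lambda>x. f x + g x)"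
  unfolding is_measure_def using signed_measure_add by fastforce

lemma le_plus_iff:
  "signed_measure E op f \<Longrightarrow> signed_measure E op g \<Longrightarrow> le_plus E op f g \<longleftrightarrow> (\<forall>x\<in>E. f x \<le> g x)"
  unfolding le_plus_def is_measure_def using signed_measure_diff by fastforce

lemma le_plusD: "le_plus E op f g \<Longrightarrow> x \<in> E \<Longrightarrow> f x \<le> g x"
  by (simp add: le_plus_def is_measure_def)

text \<open>The order axioms of le_plus: reflexive, antisymmetric (a measure vanishes off E) and
  transitive.\<close>

lemma le_plus_refl: "le_plus E op f f"
  by (simp add: le_plus_def is_measure_zero)

lemma le_plus_antisym:
  assumes "le_plus E op f g" "le_plus E op g f" shows "f = g"
proof
  fix x
  show "f x = g x"
  proof (cases "x \<in> E")
    case True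
    then show ?thesis using le_plusD[OF assms(1)] le_plusD[OF assms(2)] by force
  next
    case False
    then show ?thesis using assms(1) by (simp add: le_plus_def is_measure_def signed_measure_def)
  qed
qed

lemma le_plus_trans:
  assumes "le_plus E op f g" "le_plus E op g h" shows "le_plus E op f h"
proof -
  have "is_measure E op (\<lambda>x. (h x - g x) + (g x - f x))"
    using assms by (intro is_measure_add) (simp_all add: le_plus_def)
  then show ?thesis by (simp add: le_plus_def)
qed

lemma le_plus_add_right: "le_plus E op f g \<Longrightarrow> le_plus E op (\<lambda>x. f x + h x) (\<lambda>x. g x + h x)"
  by (simp add: le_plus_def)

lemma le_plus_uminus: "le_plus E op (\<lambda>x. - f x) (\<lambda>x. - g x) \<longleftrightarrow> le_plus E op g f"
  by (simp add: le_plus_def)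

lemma jordan_signed_measure: "m \<in> jordan E op \<Longrightarrow> signed_measure E op m"
  by (simp add: jordan_def)

lemma jordanI:
  "signed_measure E op f \<Longrightarrow> is_measure E op p \<Longrightarrow> is_measure E op q \<Longrightarrow> (\<And>x. f x = p x - q x)
   \<Longrightarrow> f \<in> jordan E op"
  unfolding jordan_def by blast

lemma jordanE:
  assumes "m \<in> jordan E op"
  obtains p q where "is_measure E op p" "is_measure E op q" "\<And>x. m x = p x - q x"
  using assms unfolding jordan_def by blast

lemma jordan_zero: "(\<lambda>x. 0) \<in> jordan E op"
  by (rule jordanI[OF _ is_measure_zero is_measure_zero]) (simp_all add: signed_measure_def)

lemma jordan_add:
  assumes "f \<in> jordan E op" "g \<in> jordan E op" shows "(\<lambda>x. f x + g x) \<in> jordan E op"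
proof -
  obtain p1 q1 p2 q2 where "is_measure E op p1" "is_measure E op q1" "\<And>x. f x = p1 x - q1 x"
    "is_measure E op p2" "is_measure E op q2" "\<And>x. g x = p2 x - q2 x"
    using assms jordanE by metis
  moreover have "signed_measure E op (\<lambda>x. f x + g x)"
    using assms by (intro signed_measure_add jordan_signed_measure)
  ultimately show ?thesis
    by (intro jordanI[where p = "\<lambda>x. p1 x + p2 x" and q = "\<lambda>x. q1 x + q2 x"] is_measure_add) auto
qed

lemma jordan_uminus: assumes "f \<in> jordan E op" shows "(\<lambda>x. - f x) \<in> jordan E op"
proof -
  obtain p q where "is_measure E op p" "is_measure E op q" "\<And>x. f x = p x - q x"
    using assms jordanE by blast
  moreover have "signed_measure E op (\<lambda>x. - f x)"
    using assms by (intro signed_measure_uminus jordan_signed_measure)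
  ultimately show ?thesis by (intro jordanI[where p = q and q = p]) auto
qed

text \<open>A signed measure dominating a Jordan signed measure is itself Jordan:
  if g = p - q and f \<ge> g, then f = (f - g + p) - q.\<close>

lemma jordan_above:
  assumes f: "signed_measure E op f" and g: "g \<in> jordan E op" and le: "\<And>x. x \<in> E \<Longrightarrow> g x \<le> f x"
  shows "f \<in> jordan E op"
proof -
  obtain p q where pq: "is_measure E op p" "is_measure E op q" "\<And>x. g x = p x - q x"
    using g jordanE by blast
  have "is_measure E op (\<lambda>x. f x - g x)"
    using le_plus_iff[OF jordan_signed_measure[OF g] f] le by (simp add: le_plus_def)
  then have "is_measure E op (\<lambda>x. (f x - g x) + p x)" using pq(1) by (rule is_measure_add)
  then show ?thesis using f pq by (intro jordanI[OF f _ pq(2)]) auto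
qed

text \<open>Any two Jordan signed measures are bounded above in J(E): by the sum of their positive parts.\<close>

lemma jordan_pair_bdd_above:
  assumes "f \<in> jordan E op" "g \<in> jordan E op" shows "bdd_above_J E op {f, g}"
proof -
  obtain p1 q1 p2 q2 where pq: "is_measure E op p1" "is_measure E op q1" "\<And>x. f x = p1 x - q1 x"
    "is_measure E op p2" "is_measure E op q2" "\<And>x. g x = p2 x - q2 x"
    using assms jordanE by metis
  let ?u = "\<lambda>x. p1 x + p2 x"
  have pu: "is_measure E op ?u" using pq by (intro is_measure_add)
  then have u: "?u \<in> jordan E op"
    by (intro jordanI[OF _ pu is_measure_zero]) (simp_all add: is_measure_def)
  have "\<forall>x\<in>E. f x \<le> ?u x \<and> g x \<le> ?u x"
    using pq unfolding is_measure_def by (smt (verit))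
  then have "le_plus E op f ?u" "le_plus E op g ?u"
    using le_plus_iff jordan_signed_measure assms u by blast+
  then show ?thesis using u unfolding bdd_above_J_def by blast
qed

subsection \<open>The additive envelope of a subadditive function\<close>

definition subadditive :: "'a set \<Rightarrow> ('a \<Rightarrow> 'a \<Rightarrow> 'a option) \<Rightarrow> ('a \<Rightarrow> real) \<Rightarrow> bool" where
  "subadditive E op d \<longleftrightarrow> (\<forall>y\<in>E. \<forall>z\<in>E. \<forall>x. op y z = Some x \<longrightarrow> d x \<le> d y + d z)"

definition envelope :: "'a set \<Rightarrow> ('a \<Rightarrow> 'a \<Rightarrow> 'a option) \<Rightarrow> ('a \<Rightarrow> real) \<Rightarrow> 'a \<Rightarrow> real" where
  "envelope E op d x = (if x \<in> E then Sup (decomp_sums E op d x) else 0)"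

lemma decomp_sums_iff:
  "\<gamma> \<in> decomp_sums E op d x \<longleftrightarrow>
     (\<exists>xs. \<gamma> = (\<Sum>y\<leftarrow>xs. d y) \<and> xs \<noteq> [] \<and> set xs \<subseteq> E \<and> psum op xs = Some x)"
  unfolding decomp_sums_def by blast

lemma decomp_sums_singleton: "x \<in> E \<Longrightarrow> d x \<in> decomp_sums E op d x"
  unfolding decomp_sums_iff by (intro exI[of _ "[x]"]) simp

lemma decomp_sums_le:
  assumes pea: "pea E op zero one" and w: "signed_measure E op w" and dw: "\<forall>y\<in>E. d y \<le> w y"
    and \<gamma>: "\<gamma> \<in> decomp_sums E op d x"
  shows "\<gamma> \<le> w x"
proof -
  obtain xs where xs: "\<gamma> = (\<Sum>y\<leftarrow>xs. d y)" "set xs \<subseteq> E" "psum op xs = Some x"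
    using \<gamma> unfolding decomp_sums_iff by blast
  have "\<gamma> \<le> (\<Sum>y\<leftarrow>xs. w y)" unfolding xs(1) using xs(2) dw by (intro sum_list_mono) auto
  also have "\<dots> = w x" using signed_measure_psum[OF pea w xs(2,3)] by simp
  finally show ?thesis .
qed

lemma decomp_sums_bdd_above:
  assumes "pea E op zero one" "signed_measure E op u" "\<forall>y\<in>E. d y \<le> u y"
  shows "bdd_above (decomp_sums E op d x)"
  using decomp_sums_le[OF assms] by (rule bdd_aboveI)

lemma decomp_sums_append:
  assumes pea: "pea E op zero one" and "\<alpha> \<in> decomp_sums E op d a" "\<beta> \<in> decomp_sums E op d b"
    and "op a b = Some c"
  shows "\<alpha> + \<beta> \<in> decomp_sums E op d c"
proof -
  obtain xs ys where "\<alpha> = (\<Sum>y\<leftarrow>xs. d y)" "xs \<noteq> []" "set xs \<subseteq> E" "psum op xs = Some a"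
    "\<beta> = (\<Sum>y\<leftarrow>ys. d y)" "set ys \<subseteq> E" "psum op ys = Some b"
    using assms(2,3) unfolding decomp_sums_iff by blast
  with psum_append[OF pea] assms(4) show ?thesis
    unfolding decomp_sums_iff by (intro exI[of _ "xs @ ys"]) auto
qed

lemma sum_list_subadditive_split:
  assumes "list_all2 (\<lambda>x (y, z). y \<in> E \<and> z \<in> E \<and> op y z = Some x) xs ps" "subadditive E op d"
  shows "(\<Sum>x\<leftarrow>xs. d x) \<le> (\<Sum>y\<leftarrow>map fst ps. d y) + (\<Sum>z\<leftarrow>map snd ps. d z)"
  using assms(1)
proof (induction rule: list_all2_induct)
  case (Cons x xs p ps)
  then have "d x \<le> d (fst p) + d (snd p)"
    using assms(2) unfolding subadditive_def by (auto split: prod.splits)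
  with Cons.IH show ?case by simp
qed simp

lemma decomp_sums_refine:
  assumes pea: "pea E op zero one" and rdp: "RDP E op" and sub: "subadditive E op d"
    and \<gamma>: "\<gamma> \<in> decomp_sums E op d c" and ab: "a \<in> E" "b \<in> E" "op a b = Some c"
  shows "\<exists>\<alpha>\<in>decomp_sums E op d a. \<exists>\<beta>\<in>decomp_sums E op d b. \<gamma> \<le> \<alpha> + \<beta>"
proof -
  obtain xs where xs: "\<gamma> = (\<Sum>y\<leftarrow>xs. d y)" "set xs \<subseteq> E" "psum op xs = Some c"
    using \<gamma> unfolding decomp_sums_iff by blast
  obtain ps where ps: "list_all2 (\<lambda>x (y, z). y \<in> E \<and> z \<in> E \<and> op y z = Some x) xs ps"
    "psum op (map fst ps) = Some a" "psum op (map snd ps) = Some b"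
    using psum_refine[OF pea rdp xs(2,3) ab] by blast
  have "set (map fst ps) \<subseteq> E" "set (map snd ps) \<subseteq> E"
    using ps(1) by (induction rule: list_all2_induct) auto
  then have "(\<Sum>y\<leftarrow>map fst ps. d y) \<in> decomp_sums E op d a"
    "(\<Sum>z\<leftarrow>map snd ps. d z) \<in> decomp_sums E op d b"
    using ps(2,3) unfolding decomp_sums_iff by (metis psum.simps(1) option.distinct(1))+
  moreover have "\<gamma> \<le> (\<Sum>y\<leftarrow>map fst ps. d y) + (\<Sum>z\<leftarrow>map snd ps. d z)"
    unfolding xs(1) using sum_list_subadditive_split[OF ps(1) sub] .
  ultimately show ?thesis by blast
qed

lemma cSup_eq_add:
  fixes A B C :: "real set"
  assumes ne: "A \<noteq> {}" "B \<noteq> {}" and bdd: "bdd_above A" "bdd_above B" "bdd_above C"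
    and sums: "\<And>\<alpha> \<beta>. \<alpha> \<in> A \<Longrightarrow> \<beta> \<in> B \<Longrightarrow> \<alpha> + \<beta> \<in> C"
    and dom: "\<And>\<gamma>. \<gamma> \<in> C \<Longrightarrow> \<exists>\<alpha>\<in>A. \<exists>\<beta>\<in>B. \<gamma> \<le> \<alpha> + \<beta>"
  shows "Sup C = Sup A + Sup B"
proof (rule antisym)
  have "\<gamma> \<le> Sup A + Sup B" if \<gamma>: "\<gamma> \<in> C" for \<gamma>
  proof -
    obtain \<alpha> \<beta> where "\<alpha> \<in> A" "\<beta> \<in> B" "\<gamma> \<le> \<alpha> + \<beta>" using dom[OF \<gamma>] by blast
    moreover from this have "\<alpha> \<le> Sup A" "\<beta> \<le> Sup B"
      using cSup_upper bdd(1,2) by blast+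
    ultimately show ?thesis by linarith
  qed
  moreover have "C \<noteq> {}" using ne sums by blast
  ultimately show "Sup C \<le> Sup A + Sup B" by (intro cSup_least)
next
  have "\<alpha> \<le> Sup C - \<beta>" if "\<alpha> \<in> A" "\<beta> \<in> B" for \<alpha> \<beta>
    using cSup_upper[OF sums[OF that] bdd(3)] by simp
  then have "Sup A \<le> Sup C - \<beta>" if "\<beta> \<in> B" for \<beta>
    using that by (intro cSup_least[OF ne(1)])
  then have "\<beta> \<le> Sup C - Sup A" if "\<beta> \<in> B" for \<beta>
    using that by fastforce
  then have "Sup B \<le> Sup C - Sup A" by (intro cSup_least[OF ne(2)])
  then show "Sup A + Sup B \<le> Sup C" by simp
qed

lemma envelope_ge:
  assumes "pea E op zero one" "signed_measure E op u" "\<forall>y\<in>E. d y \<le> u y" "x \<in> E"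
  shows "d x \<le> envelope E op d x"
  using cSup_upper[OF decomp_sums_singleton[OF assms(4)] decomp_sums_bdd_above[OF assms(1-3)]] assms(4)
  by (simp add: envelope_def)

lemma envelope_le:
  assumes "pea E op zero one" "signed_measure E op w" "\<forall>y\<in>E. d y \<le> w y" "x \<in> E"
  shows "envelope E op d x \<le> w x"
proof -
  have "decomp_sums E op d x \<noteq> {}" using decomp_sums_singleton[OF assms(4)] by blast
  then have "Sup (decomp_sums E op d x) \<le> w x"
    using decomp_sums_le[OF assms(1-3)] by (rule cSup_least)
  then show ?thesis using assms(4) by (simp add: envelope_def)
qed

lemma envelope_signed_measure:
  assumes pea: "pea E op zero one" and rdp: "RDP E op" and sub: "subadditive E op d"
    and u: "signed_measure E op u" "\<forall>y\<in>E. d y \<le> u y"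
  shows "signed_measure E op (envelope E op d)"
  unfolding signed_measure_def
proof (intro conjI allI ballI impI)
  fix a b c assume ab: "a \<in> E" "b \<in> E" "op a b = Some c"
  then have "c \<in> E" by (rule pea_closed[OF pea])
  have "Sup (decomp_sums E op d c) = Sup (decomp_sums E op d a) + Sup (decomp_sums E op d b)"
  proof (rule cSup_eq_add)
    show "decomp_sums E op d a \<noteq> {}" "decomp_sums E op d b \<noteq> {}"
      using decomp_sums_singleton[OF ab(1)] decomp_sums_singleton[OF ab(2)] by blast+
    show "bdd_above (decomp_sums E op d a)" "bdd_above (decomp_sums E op d b)"
      "bdd_above (decomp_sums E op d c)"
      by (rule decomp_sums_bdd_above[OF pea u])+
    show "\<alpha> + \<beta> \<in> decomp_sums E op d c"
      if "\<alpha> \<in> decomp_sums E op d a" "\<beta> \<in> decomp_sums E op d b" for \<alpha> \<beta>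
      using decomp_sums_append[OF pea that ab(3)] .
    show "\<exists>\<alpha>\<in>decomp_sums E op d a. \<exists>\<beta>\<in>decomp_sums E op d b. \<gamma> \<le> \<alpha> + \<beta>"
      if "\<gamma> \<in> decomp_sums E op d c" for \<gamma>
      using decomp_sums_refine[OF pea rdp sub that ab] .
  qed
  with ab \<open>c \<in> E\<close> show "envelope E op d c = envelope E op d a + envelope E op d b"
    by (simp add: envelope_def)
qed (simp add: envelope_def)

subsection \<open>Suprema and infima of bounded families in J(E)\<close>

lemma SUP_signed_measures_subadditive:
  assumes I: "I \<noteq> {}" and m: "\<And>i. i \<in> I \<Longrightarrow> signed_measure E op (m i)"
    and bdd: "\<And>y. y \<in> E \<Longrightarrow> bdd_above ((\<lambda>i. m i y) ` I)"
  shows "subadditive E op (\<lambda>y. SUP i\<in>I. m i y)"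
  unfolding subadditive_def
proof (intro ballI allI impI)
  fix y z x assume yz: "y \<in> E" "z \<in> E" "op y z = Some x"
  have "m i x \<le> (SUP i\<in>I. m i y) + (SUP i\<in>I. m i z)" if i: "i \<in> I" for i
  proof -
    have "m i x = m i y + m i z" using m[OF i] yz unfolding signed_measure_def by blast
    also have "\<dots> \<le> (SUP i\<in>I. m i y) + (SUP i\<in>I. m i z)"
      using cSUP_upper[OF i bdd[OF yz(1)]] cSUP_upper[OF i bdd[OF yz(2)]] by (rule add_mono)
    finally show ?thesis .
  qed
  then show "(SUP i\<in>I. m i x) \<le> (SUP i\<in>I. m i y) + (SUP i\<in>I. m i z)"
    using I by (auto intro!: cSUP_least)
qed

lemma lub_J_envelope:
  assumes pea: "pea E op zero one" and rdp: "RDP E op" and I: "I \<noteq> {}"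
    and mJ: "m ` I \<subseteq> jordan E op" and bdd: "bdd_above_J E op (m ` I)"
  shows "is_lub_J E op (m ` I) (envelope E op (\<lambda>y. SUP i\<in>I. m i y))"
proof -
  define d where "d = (\<lambda>y. SUP i\<in>I. m i y)"
  then have d_eq: "d y = (SUP i\<in>I. m i y)" for y by simp
  obtain u where u: "u \<in> jordan E op" "\<forall>i\<in>I. le_plus E op (m i) u"
    using bdd unfolding bdd_above_J_def by auto
  have m: "signed_measure E op (m i)" if "i \<in> I" for i
    using mJ that by (intro jordan_signed_measure) blast
  have bdd_at: "bdd_above ((\<lambda>i. m i y) ` I)" if "y \<in> E" for y
    using u(2) le_plusD[OF _ that] by (intro bdd_aboveI2[where M = "u y"]) blast
  have m_le_d: "m i y \<le> d y" if "i \<in> I" "y \<in> E" for i y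
    unfolding d_eq using cSUP_upper[OF that(1) bdd_at[OF that(2)]] .
  have d_le: "\<forall>y\<in>E. d y \<le> w y" if w: "\<forall>i\<in>I. le_plus E op (m i) w" for w
  proof
    fix y assume "y \<in> E"
    then have "m i y \<le> w y" if "i \<in> I" for i using w that le_plusD[OF _ \<open>y \<in> E\<close>] by blast
    then show "d y \<le> w y" unfolding d_eq using I by (auto intro!: cSUP_least)
  qed
  have "subadditive E op d"
    unfolding d_def using SUP_signed_measures_subadditive[OF I m bdd_at] .
  then have D: "signed_measure E op (envelope E op d)"
    using envelope_signed_measure[OF pea rdp _ jordan_signed_measure[OF u(1)] d_le[OF u(2)]] by blast
  have upper: "le_plus E op (m i) (envelope E op d)" if "i \<in> I" for i
    using m_le_d[OF that] envelope_ge[OF pea jordan_signed_measure[OF u(1)] d_le[OF u(2)]]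
    by (auto simp: le_plus_iff[OF m[OF that] D] intro: order_trans)
  obtain i0 where i0: "i0 \<in> I" using I by blast
  then have "m i0 \<in> jordan E op" using mJ by blast
  then have "envelope E op d \<in> jordan E op"
    using jordan_above[OF D _ le_plusD[OF upper[OF i0]]] by blast
  moreover have "le_plus E op (envelope E op d) w"
    if w: "w \<in> jordan E op" "\<forall>f\<in>m ` I. le_plus E op f w" for w
  proof -
    have "\<forall>y\<in>E. d y \<le> w y" using w(2) by (intro d_le) simp
    then show ?thesis
      using envelope_le[OF pea jordan_signed_measure[OF w(1)]]
      by (simp add: le_plus_iff[OF D jordan_signed_measure[OF w(1)]])
  qed
  ultimately show ?thesis using upper unfolding is_lub_J_def d_def by blast
qed

lemma lub_J_unique: "is_lub_J E op S s \<Longrightarrow> is_lub_J E op S s' \<Longrightarrow> s = s'"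
  unfolding is_lub_J_def by (blast intro: le_plus_antisym)

lemma jordan_uminus_iff: "(\<lambda>x. - f x) \<in> jordan E op \<longleftrightarrow> f \<in> jordan E op"
proof
  assume "(\<lambda>x. - f x) \<in> jordan E op"
  from jordan_uminus[OF this] show "f \<in> jordan E op" by simp
qed (rule jordan_uminus)

lemma ball_jordan_uminus:
  "(\<forall>u\<in>jordan E op. P u) \<longleftrightarrow> (\<forall>v\<in>jordan E op. P (\<lambda>x. - v x))"
proof
  assume P: "\<forall>v\<in>jordan E op. P (\<lambda>x. - v x)"
  have "P (\<lambda>x. - (- u x))" if "u \<in> jordan E op" for u
    by (rule bspec[OF P jordan_uminus[OF that]])
  then show "\<forall>u\<in>jordan E op. P u" by simp
qed (use jordan_uminus in blast)

lemma bex_jordan_uminus: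
  "(\<exists>u\<in>jordan E op. P u) \<longleftrightarrow> (\<exists>v\<in>jordan E op. P (\<lambda>x. - v x))"
  using ball_jordan_uminus[of E op "\<lambda>u. \<not> P u"] by blast

lemma glb_J_iff_lub_J_uminus:
  "is_glb_J E op S t \<longleftrightarrow> is_lub_J E op ((\<lambda>f x. - f x) ` S) (\<lambda>x. - t x)"
  unfolding is_glb_J_def is_lub_J_def
    ball_jordan_uminus[of E op
      "\<lambda>u. (\<forall>g\<in>(\<lambda>f x. - f x) ` S. le_plus E op g u) \<longrightarrow> le_plus E op (\<lambda>x. - t x) u"]
  by (simp add: jordan_uminus_iff le_plus_uminus)

lemma bdd_below_J_iff_bdd_above_J_uminus:
  "bdd_below_J E op S \<longleftrightarrow> bdd_above_J E op ((\<lambda>f x. - f x) ` S)"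
  unfolding bdd_below_J_def bdd_above_J_def
    bex_jordan_uminus[of E op "\<lambda>u. \<forall>g\<in>(\<lambda>f x. - f x) ` S. le_plus E op g u"]
  by (simp add: le_plus_uminus)

lemma lub_J_formula:
  assumes "pea E op zero one" "RDP E op" "I \<noteq> {}" "m ` I \<subseteq> jordan E op"
    "bdd_above_J E op (m ` I)" "is_lub_J E op (m ` I) s" "x \<in> E"
  shows "s x = Sup (decomp_sums E op (\<lambda>y. SUP i\<in>I. m i y) x)"
proof -
  have "s = envelope E op (\<lambda>y. SUP i\<in>I. m i y)"
    using lub_J_unique[OF assms(6) lub_J_envelope[OF assms(1-5)]] .
  with assms(7) show ?thesis by (simp add: envelope_def)
qed

lemma decomp_sums_uminus:
  "decomp_sums E op (\<lambda>y. - d y) x = uminus ` decomp_sums E op d x"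
proof -
  have neg: "(\<Sum>y\<leftarrow>xs. - d y) = - (\<Sum>y\<leftarrow>xs. d y)" for xs by (induction xs) simp_all
  show ?thesis unfolding decomp_sums_def neg by auto
qed

text \<open>(c) follows from (b) applied to the negated family.\<close>

lemma glb_J_formula:
  assumes pea: "pea E op zero one" and rdp: "RDP E op" and I: "I \<noteq> {}"
    and mJ: "m ` I \<subseteq> jordan E op" and bdd: "bdd_below_J E op (m ` I)"
    and t: "is_glb_J E op (m ` I) t" and x: "x \<in> E"
  shows "t x = Inf (decomp_sums E op (\<lambda>y. INF i\<in>I. m i y) x)"
proof -
  let ?n = "\<lambda>i x. - m i x"
  have img: "(\<lambda>f x. - f x) ` m ` I = ?n ` I" by (simp add: image_image)
  have "?n ` I \<subseteq> jordan E op" using mJ jordan_uminus by blast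
  moreover have "bdd_above_J E op (?n ` I)"
    using bdd unfolding bdd_below_J_iff_bdd_above_J_uminus img .
  moreover have "is_lub_J E op (?n ` I) (\<lambda>x. - t x)"
    using t unfolding glb_J_iff_lub_J_uminus img .
  ultimately have "- t x = Sup (decomp_sums E op (\<lambda>y. SUP i\<in>I. - m i y) x)"
    using lub_J_formula[OF pea rdp I _ _ _ x] by blast
  moreover have "(\<lambda>y. INF i\<in>I. m i y) = (\<lambda>y. - (SUP i\<in>I. - m i y))"
    by (simp add: Inf_real_def image_image)
  ultimately show ?thesis
    by (simp add: decomp_sums_uminus Inf_real_def image_image)
qed

lemma jordan_lub_exists:
  assumes "pea E op zero one" "RDP E op" "S \<subseteq> jordan E op" "S \<noteq> {}" "bdd_above_J E op S"
  shows "\<exists>s. is_lub_J E op S s"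
  using lub_J_envelope[of E op zero one S "\<lambda>f. f"] assms by auto

lemma jordan_glb_exists:
  assumes "pea E op zero one" "RDP E op" "S \<subseteq> jordan E op" "S \<noteq> {}" "bdd_below_J E op S"
  shows "\<exists>t. is_glb_J E op S t"
proof -
  have "(\<lambda>f x. - f x) ` S \<subseteq> jordan E op" using assms(3) jordan_uminus by blast
  then obtain s where "is_lub_J E op ((\<lambda>f x. - f x) ` S) s"
    using jordan_lub_exists[OF assms(1,2)] assms(4,5) bdd_below_J_iff_bdd_above_J_uminus by blast
  then have "is_glb_J E op S (\<lambda>x. - s x)" by (simp add: glb_J_iff_lub_J_uminus)
  then show ?thesis by blast
qed

lemma jordan_pair_lub_glb:
  assumes "pea E op zero one" "RDP E op" "f \<in> jordan E op" "g \<in> jordan E op"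
  shows "(\<exists>s. is_lub_J E op {f, g} s) \<and> (\<exists>t. is_glb_J E op {f, g} t)"
proof -
  have "bdd_below_J E op {f, g}"
    using jordan_pair_bdd_above[OF jordan_uminus jordan_uminus, OF assms(3,4)]
    by (simp add: bdd_below_J_iff_bdd_above_J_uminus)
  then show ?thesis
    using jordan_lub_exists[OF assms(1,2)] jordan_glb_exists[OF assms(1,2)]
      jordan_pair_bdd_above[OF assms(3,4)] assms(3,4) by simp
qed

theorem theorem3p5:
  fixes E :: "'a set" and op :: "'a \<Rightarrow> 'a \<Rightarrow> 'a option" and zero one :: 'a
  assumes "pea E op zero one" and "RDP E op"
  shows
   \<comment> \<open>(a) J(E) is an Abelian po-group under pointwise addition and le_plus\<close>
   "((\<lambda>x. 0) \<in> jordan E op \<and>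
     (\<forall>m1\<in>jordan E op. \<forall>m2\<in>jordan E op. (\<lambda>x. m1 x + m2 x) \<in> jordan E op) \<and>
     (\<forall>m\<in>jordan E op. (\<lambda>x. - m x) \<in> jordan E op) \<and>
     (\<forall>m\<in>jordan E op. le_plus E op m m) \<and>
     (\<forall>m1\<in>jordan E op. \<forall>m2\<in>jordan E op.
        le_plus E op m1 m2 \<and> le_plus E op m2 m1 \<longrightarrow> m1 = m2) \<and>
     (\<forall>m1\<in>jordan E op. \<forall>m2\<in>jordan E op. \<forall>m3\<in>jordan E op.
        le_plus E op m1 m2 \<and> le_plus E op m2 m3 \<longrightarrow> le_plus E op m1 m3) \<and>
     (\<forall>m1\<in>jordan E op. \<forall>m2\<in>jordan E op. \<forall>m3\<in>jordan E op.
        le_plus E op m1 m2 \<longrightarrow> le_plus E op (\<lambda>x. m1 x + m3 x) (\<lambda>x. m2 x + m3 x)) \<and>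
     \<comment> \<open>lattice-ordered\<close>
     (\<forall>m1\<in>jordan E op. \<forall>m2\<in>jordan E op.
        (\<exists>s. is_lub_J E op {m1, m2} s) \<and> (\<exists>t. is_glb_J E op {m1, m2} t)) \<and>
     \<comment> \<open>Dedekind complete\<close>
     (\<forall>S. S \<subseteq> jordan E op \<and> S \<noteq> {} \<and> bdd_above_J E op S \<longrightarrow> (\<exists>s. is_lub_J E op S s)) \<and>
     (\<forall>S. S \<subseteq> jordan E op \<and> S \<noteq> {} \<and> bdd_below_J E op S \<longrightarrow> (\<exists>s. is_glb_J E op S s)))
   \<and>
   \<comment> \<open>(b)\<close>
   (\<forall>(I :: 'i set) (m :: 'i \<Rightarrow> 'a \<Rightarrow> real) s.
      I \<noteq> {} \<and> m ` I \<subseteq> jordan E op \<and> bdd_above_J E op (m ` I) \<and> is_lub_J E op (m ` I) s \<longrightarrow>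
      (\<forall>x\<in>E. s x = Sup (decomp_sums E op (\<lambda>y. SUP i\<in>I. m i y) x)))
   \<and>
   \<comment> \<open>(c)\<close>
   (\<forall>(I :: 'i set) (m :: 'i \<Rightarrow> 'a \<Rightarrow> real) t.
      I \<noteq> {} \<and> m ` I \<subseteq> jordan E op \<and> bdd_below_J E op (m ` I) \<and> is_glb_J E op (m ` I) t \<longrightarrow>
      (\<forall>x\<in>E. t x = Inf (decomp_sums E op (\<lambda>y. INF i\<in>I. m i y) x)))"
  using jordan_pair_lub_glb[OF assms]
  by (intro conjI ballI allI impI; (elim conjE)?;
      blast intro: jordan_zero jordan_add jordan_uminus le_plus_refl le_plus_antisym
        le_plus_trans le_plus_add_right jordan_lub_exists[OF assms] jordan_glb_exists[OF assms]
        lub_J_formula[OF assms] glb_J_formula[OF assms])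

end
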